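(* Let $G=(V,E)$ be a graph and $v\in V$. Then $F_v=\emptyset$ if and only if $(e,e')\in\mathfrak d_v^*$ for all edges $e,e'\in E_v$. Moreover, if $F_v\neq\emptyset$, then $|F_v|\geq 2$.
   Context: All graphs are finite, simple and undirected. For a graph $G=(V,E)$ and $v\in V$, $E_v$ denotes the set of edges incident to $v$. For two distinct adjacent edges $e=(v,u)$, $f=(v,w)$, a square spanned by $e$ and $f$ is a $4$-cycle $v,u,x,w,v$ in $G$ with $x\notin\{v,u,w\}$; $x$ is its top vertex. The square is chordless if neither $(u,w)$ nor $(v,x)$ is an edge of $G$. In a chordless square $v,u,x,w$, the edge $(x,w)$ is the opposite edge of $(v,u)$ and $(x,u)$ is the opposite edge of $(v,w)$ (and vice versa). The relation $\delta(G)\subseteq E\times E$: $(e,f)\in\delta(G)$ iff (i) $e,f$ are distinct adjacent edges and it is not the case that $e$ and $f$ span exactly one square and that square is chordless; or (ii) $e$ and $f$ are opposite edges of a chordless square; or (iii) $e=f$. For a reflexive symmetric relation $R$ on a set, $R^*$ denotes its transitive closure, i.e. the finest equivalence relation containing $R$. Define $\mathfrak d_v=((E_v\times E)\cup(E\times E_v))\cap\delta(G)$, and $\mathfrak d_v^*$ the finest equivalence relation on $E$ containing $\mathfrak d_v$. Let $F_v\subseteq E\setminus E_v$ be the set of edges that are the edges not incident to $v$ of some chordless square spanned by two edges $e,e'\in E_v$ with $(e,e')\notin\mathfrak d_v^*$. *)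

theory Defs
  imports Main
begin

definition graph :: "'a set \<Rightarrow> 'a set set \<Rightarrow> bool" where
  "graph V E \<longleftrightarrow> finite V \<and> (\<forall>e\<in>E. \<exists>u w. u \<noteq> w \<and> u \<in> V \<and> w \<in> V \<and> e = {u, w})"

definition inc_edges :: "'a set set \<Rightarrow> 'a \<Rightarrow> 'a set set" where
  "inc_edges E v = {e\<in>E. v \<in> e}"

definition sq_tops :: "'a set set \<Rightarrow> 'a set \<Rightarrow> 'a set \<Rightarrow> 'a set" where
  "sq_tops E e f = {x. \<exists>v u w. e = {v, u} \<and> f = {v, w} \<and> distinct [v, u, w] \<and>
      x \<notin> {v, u, w} \<and> {u, x} \<in> E \<and> {x, w} \<in> E}"

definition single_chordless :: "'a set set \<Rightarrow> 'a set \<Rightarrow> 'a set \<Rightarrow> bool" where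
  "single_chordless E e f \<longleftrightarrow> (\<exists>v u w x. e = {v, u} \<and> f = {v, w} \<and> distinct [v, u, w] \<and>
      sq_tops E e f = {x} \<and> {u, w} \<notin> E \<and> {v, x} \<notin> E)"

definition opposite :: "'a set set \<Rightarrow> 'a set \<Rightarrow> 'a set \<Rightarrow> bool" where
  "opposite E e f \<longleftrightarrow> (\<exists>a b c d. distinct [a, b, c, d] \<and> e = {a, b} \<and> f = {c, d} \<and>
      {a, b} \<in> E \<and> {b, c} \<in> E \<and> {c, d} \<in> E \<and> {d, a} \<in> E \<and>
      {a, c} \<notin> E \<and> {b, d} \<notin> E)"

definition delta :: "'a set set \<Rightarrow> ('a set \<times> 'a set) set" where
  "delta E = {(e, f). e \<in> E \<and> f \<in> E \<and>
      ((e \<noteq> f \<and> e \<inter> f \<noteq> {} \<and> \<not> single_chordless E e f) \<or> opposite E e f \<or> e = f)}"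

definition delta_v :: "'a set set \<Rightarrow> 'a \<Rightarrow> ('a set \<times> 'a set) set" where
  "delta_v E v = ((inc_edges E v \<times> E) \<union> (E \<times> inc_edges E v)) \<inter> delta E"

definition delta_v_star :: "'a set set \<Rightarrow> 'a \<Rightarrow> ('a set \<times> 'a set) set" where
  "delta_v_star E v = \<Inter>{R. equiv E R \<and> delta_v E v \<subseteq> R}"

definition F_v :: "'a set set \<Rightarrow> 'a \<Rightarrow> 'a set set" where
  "F_v E v = {g. \<exists>e e' u w x. e \<in> inc_edges E v \<and> e' \<in> inc_edges E v \<and>
      (e, e') \<notin> delta_v_star E v \<and>
      e = {v, u} \<and> e' = {v, w} \<and> distinct [v, u, w] \<and> x \<notin> {v, u, w} \<and>
      {u, x} \<in> E \<and> {x, w} \<in> E \<and> {u, w} \<notin> E \<and> {v, x} \<notin> E \<and>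
      (g = {u, x} \<or> g = {x, w})}"

end

theory Submission
  imports Defs
begin

text \<open>If two edges at v are not \<open>\<delta>\<^sub>v\<^sup>*\<close>-related, they are in particular not \<open>\<delta>\<close>-related;
  being distinct and adjacent, they must span exactly one square, which is chordless. Its two
  edges not incident to v then lie in \<open>F\<^sub>v\<close>, and they are distinct, so \<open>F\<^sub>v\<close> is either empty
  or has at least two elements.\<close>

lemma distinct_doubletons_eq:
  assumes "distinct [v, u, w]" "distinct [v', u', w']"
    and "{v, u} = {v', u'}" "{v, w} = {v', w'}"
  shows "v = v' \<and> u = u' \<and> w = w'"
  using assms by (auto simp: doubleton_eq_iff)

lemma finite_edges: "graph V E \<Longrightarrow> finite E"
  unfolding graph_def by (metis (no_types, lifting) Pow_iff finite_Pow_iff finite_subset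
      insert_subset empty_subsetI subsetI)

lemma inc_edgeE:
  assumes "graph V E" "e \<in> inc_edges E v"
  obtains u where "e = {v, u}" "u \<noteq> v"
proof -
  obtain a b where "a \<noteq> b" "e = {a, b}" "v \<in> e"
    using assms unfolding graph_def inc_edges_def by blast
  then show ?thesis
    using that by (metis insert_commute insertE singletonD)
qed

lemma delta_v_subset_delta_v_star: "delta_v E v \<subseteq> delta_v_star E v"
  unfolding delta_v_star_def by blast

lemma equiv_delta_v_star: "equiv E (delta_v_star E v)"
proof -
  have full: "E \<times> E \<in> {R. equiv E R \<and> delta_v E v \<subseteq> R}"
    by (auto simp: equiv_def refl_on_def sym_def trans_def delta_v_def delta_def)
  have "refl_on E (delta_v_star E v)" "delta_v_star E v \<subseteq> E \<times> E"
    using full unfolding delta_v_star_def refl_on_def equiv_def by blast+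
  moreover have "sym (delta_v_star E v)" "trans (delta_v_star E v)"
    unfolding delta_v_star_def sym_def trans_def equiv_def by blast+
  ultimately show ?thesis by (simp add: equiv_def)
qed

lemma F_vI:
  assumes "{v, u} \<in> inc_edges E v" "{v, w} \<in> inc_edges E v"
    and "({v, u}, {v, w}) \<notin> delta_v_star E v" "distinct [v, u, w]" "x \<notin> {v, u, w}"
    and "{u, x} \<in> E" "{x, w} \<in> E" "{u, w} \<notin> E" "{v, x} \<notin> E"
  shows "{u, x} \<in> F_v E v" "{x, w} \<in> F_v E v"
  using assms unfolding F_v_def by blast+

lemma F_vE:
  assumes "g \<in> F_v E v"
  obtains u w x where "({v, u}, {v, w}) \<notin> delta_v_star E v"
    "{v, u} \<in> inc_edges E v" "{v, w} \<in> inc_edges E v" "distinct [v, u, w]" "x \<notin> {v, u, w}"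
    "{u, x} \<in> E" "{x, w} \<in> E" "{u, w} \<notin> E" "{v, x} \<notin> E"
  using assms unfolding F_v_def by blast

lemma F_v_subset_edges: "F_v E v \<subseteq> E"
  unfolding F_v_def by auto

lemma single_chordless_square:
  assumes "single_chordless E {v, u} {v, w}" "distinct [v, u, w]"
  obtains x where "x \<notin> {v, u, w}" "{u, x} \<in> E" "{x, w} \<in> E" "{u, w} \<notin> E" "{v, x} \<notin> E"
proof -
  obtain v' u' w' x where sc: "{v, u} = {v', u'}" "{v, w} = {v', w'}" "distinct [v', u', w']"
      "sq_tops E {v, u} {v, w} = {x}" "{u', w'} \<notin> E" "{v', x} \<notin> E"
    using assms(1) unfolding single_chordless_def by blast
  then have "x \<in> sq_tops E {v, u} {v, w}" by simp
  then obtain v'' u'' w'' where sq: "{v, u} = {v'', u''}" "{v, w} = {v'', w''}"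
      "distinct [v'', u'', w'']" "x \<notin> {v'', u'', w''}" "{u'', x} \<in> E" "{x, w''} \<in> E"
    unfolding sq_tops_def by blast
  have "v' = v \<and> u' = u \<and> w' = w"
    using distinct_doubletons_eq[OF assms(2) sc(3) sc(1,2)] by simp
  moreover have "v'' = v \<and> u'' = u \<and> w'' = w"
    using distinct_doubletons_eq[OF assms(2) sq(3) sq(1,2)] by simp
  ultimately show ?thesis
    using that[of x] sc(5,6) sq(4-6) by simp
qed

lemma single_chordless_if_not_delta_v_star:
  assumes "e \<in> inc_edges E v" "e' \<in> inc_edges E v" "(e, e') \<notin> delta_v_star E v"
  shows "e \<noteq> e'" "single_chordless E e e'"
proof -
  have "e \<in> E" using assms(1) by (simp add: inc_edges_def)
  then show "e \<noteq> e'"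
    using assms(3) equiv_delta_v_star[of E v] by (auto simp: equiv_def dest: refl_onD)
  have adjacent: "e \<in> E" "e' \<in> E" "v \<in> e \<inter> e'"
    using assms(1,2) by (auto simp: inc_edges_def)
  have "(e, e') \<notin> delta_v E v"
    using assms(3) delta_v_subset_delta_v_star[of E v] by blast
  then show "single_chordless E e e'"
    using assms(1) adjacent \<open>e \<noteq> e'\<close> unfolding delta_v_def delta_def by blast
qed

lemma delta_v_star_if_F_v_empty:
  assumes "graph V E" "F_v E v = {}" "e \<in> inc_edges E v" "e' \<in> inc_edges E v"
  shows "(e, e') \<in> delta_v_star E v"
proof (rule ccontr)
  assume unrelated: "(e, e') \<notin> delta_v_star E v"
  obtain u w where uw: "e = {v, u}" "u \<noteq> v" "e' = {v, w}" "w \<noteq> v"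
    using inc_edgeE[OF assms(1,3)] inc_edgeE[OF assms(1,4)] by metis
  have "e \<noteq> e'" "single_chordless E e e'"
    using single_chordless_if_not_delta_v_star[OF assms(3,4) unrelated] by blast+
  then have dist: "distinct [v, u, w]" using uw by auto
  obtain x where "x \<notin> {v, u, w}" "{u, x} \<in> E" "{x, w} \<in> E" "{u, w} \<notin> E" "{v, x} \<notin> E"
    using single_chordless_square[of E v u w] \<open>single_chordless E e e'\<close> uw(1,3) dist by blast
  then have "{u, x} \<in> F_v E v"
    using F_vI(1)[of v u E w x] assms(3,4) unrelated uw(1,3) dist by blast
  then show False using assms(2) by blast
qed

lemma card_F_v_ge_2:
  assumes "graph V E" "F_v E v \<noteq> {}"
  shows "card (F_v E v) \<ge> 2"
proof -
  obtain g where "g \<in> F_v E v" using assms(2) by blast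
  then obtain u w x where sq: "({v, u}, {v, w}) \<notin> delta_v_star E v"
      "{v, u} \<in> inc_edges E v" "{v, w} \<in> inc_edges E v" "distinct [v, u, w]" "x \<notin> {v, u, w}"
      "{u, x} \<in> E" "{x, w} \<in> E" "{u, w} \<notin> E" "{v, x} \<notin> E"
    by (rule F_vE)
  have "{{u, x}, {x, w}} \<subseteq> F_v E v"
    using F_vI[OF sq(2,3,1,4-9)] by simp
  moreover have "card {{u, x}, {x, w}} = 2"
    using sq(4,5) by (auto simp: doubleton_eq_iff)
  moreover have "finite (F_v E v)"
    using finite_subset[OF F_v_subset_edges finite_edges[OF assms(1)]] .
  ultimately show ?thesis by (metis card_mono)
qed

theorem lemma3p1:
  fixes V :: "'a set" and E :: "'a set set" and v :: 'a
  assumes "graph V E" and "v \<in> V"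
  shows "(F_v E v = {} \<longleftrightarrow> (\<forall>e\<in>inc_edges E v. \<forall>e'\<in>inc_edges E v. (e, e') \<in> delta_v_star E v))
         \<and> (F_v E v \<noteq> {} \<longrightarrow> card (F_v E v) \<ge> 2)"
proof (intro conjI impI iffI)
  show "F_v E v = {}" if "\<forall>e\<in>inc_edges E v. \<forall>e'\<in>inc_edges E v. (e, e') \<in> delta_v_star E v"
    using that unfolding F_v_def by blast
  show "\<forall>e\<in>inc_edges E v. \<forall>e'\<in>inc_edges E v. (e, e') \<in> delta_v_star E v" if "F_v E v = {}"
    using delta_v_star_if_F_v_empty[OF assms(1) that] by blast
  show "card (F_v E v) \<ge> 2" if "F_v E v \<noteq> {}"
    using card_F_v_ge_2[OF assms(1) that] .
qed

end
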